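(* For all integers $n\ge 0$ and $m\ge 1$, \[ -\frac{2E_{n+m+1}}{\binom{n+m}{n}(n+m+1)}=\sum_{l=0}^{n}\sum_{k=0}^{m}\binom{n}{l}\binom{m}{k}E_{l}E_{k}\,\frac{\Gamma(n-l+1)\Gamma(m-k+1)}{\Gamma(n+m-l-k+2)}, \] and equivalently \[ E_{n+m+1}=-\frac{1}{2}\sum_{l=0}^{n}\sum_{k=0}^{m}\frac{\binom{n}{l}\binom{m}{k}\binom{n+m}{n}}{\binom{n+m-l-k}{n-l}}\cdot\frac{(n+m+1)E_{l}E_{k}}{n+m-l-k+1}. \]
   Context: The Euler numbers $E_n$ are defined by $\frac{2}{e^t+1}=\sum_{n\ge 0}E_n\frac{t^n}{n!}$ (so $E_n=E_n(0)$, where the Euler polynomials are given by $\frac{2}{e^t+1}e^{xt}=\sum_{n\ge0}E_n(x)\frac{t^n}{n!}$). $\Gamma$ is the Euler gamma function. *)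

theory Defs
  imports "HOL-Analysis.Analysis" "HOL-Computational_Algebra.Formal_Power_Series"
begin

definition euler_num :: "nat \<Rightarrow> real" where
  "euler_num n = fact n * fps_nth (fps_const 2 * inverse (fps_exp 1 + 1)) n"

end

theory Submission
  imports Defs
begin

(* Write e_i = E_i / i! for the Taylor coefficients of F = 2/(e^t+1).
   Comparing coefficients in F * (e^t + 1) = 2 gives the convolution recurrence
     sum_{i<=j} e_i / (j+1-i)! = -2 e_(j+1).
   For ANY sequence a with such a recurrence, the double sum
     S(n,m) = sum_{l<=n} sum_{k<=m} a_l a_k / (n+m+1-l-k)!
   is invariant under moving one unit from m to n, i.e. S(n,m+1) = S(n+1,m):
   splitting off the last row resp. column, both equal the common core plus
   the symmetric product a_(m+1) * c * a_(n+1).  Hence S(n,m) = S(n+m,0), which the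
   recurrence (with a_0 = 1) evaluates to -2 e_(n+m+1).
   Finally each summand of the theorem is a factorial multiple of the
   corresponding summand of S(n,m): n! m! in the Gamma form and (n+m+1)! in
   the binomial form, and (n+m+1)! = C(n+m,n) (n+m+1) n! m! links the two. *)

definition euler_coeff :: "nat \<Rightarrow> real" where
  "euler_coeff i = fps_nth (fps_const 2 * inverse (fps_exp 1 + 1)) i"

lemma euler_num_eq_fact_coeff: "euler_num i = fact i * euler_coeff i"
  by (simp add: euler_num_def euler_coeff_def)

lemma euler_coeff_0: "euler_coeff 0 = 1"
  by (simp add: euler_coeff_def)

lemma euler_coeff_recurrence:
  "(\<Sum>i=0..j. euler_coeff i / fact (Suc j - i)) = -2 * euler_coeff (Suc j)"
proof -
  define F :: "real fps" where "F = fps_const 2 * inverse (fps_exp 1 + 1)"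
  have "F * (fps_exp 1 + 1) = fps_const 2"
    unfolding F_def by (simp add: mult.assoc inverse_mult_eq_1)
  hence "fps_nth (F * fps_exp 1 + F) (Suc j) = fps_nth (fps_const 2) (Suc j)"
    by (simp add: distrib_left)
  hence "(\<Sum>i=0..Suc j. fps_nth F i * (1 / fact (Suc j - i))) + fps_nth F (Suc j) = 0"
    by (simp add: fps_mult_nth)
  hence "(\<Sum>i=0..j. fps_nth F i / fact (Suc j - i)) + 2 * fps_nth F (Suc j) = 0"
    by (simp add: sum.atLeast0_atMost_Suc)
  thus ?thesis unfolding euler_coeff_def F_def[symmetric] by linarith
qed

definition conv_sum :: "(nat \<Rightarrow> 'a::field_char_0) \<Rightarrow> nat \<Rightarrow> nat \<Rightarrow> 'a" where
  "conv_sum a n m = (\<Sum>l=0..n. \<Sum>k=0..m. a l * a k / fact (n + m + 1 - l - k))"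

lemma conv_sum_shift:
  fixes a :: "nat \<Rightarrow> 'a::field_char_0" and c :: 'a
  assumes rec: "\<And>j. (\<Sum>i=0..j. a i / fact (Suc j - i)) = c * a (Suc j)"
  shows "conv_sum a n (Suc m) = conv_sum a (Suc n) m"
proof -
  define core where "core = (\<Sum>l=0..n. \<Sum>k=0..m. a l * a k / fact (n + m + 2 - l - k))"
  have "conv_sum a n (Suc m)
      = (\<Sum>l=0..n. (\<Sum>k=0..m. a l * a k / fact (n + m + 2 - l - k))
                    + a (Suc m) * (a l / fact (Suc n - l)))"
    unfolding conv_sum_def
    by (intro sum.cong) (auto simp: sum.atLeast0_atMost_Suc Suc_diff_le)
  also have "\<dots> = core + a (Suc m) * (\<Sum>l=0..n. a l / fact (Suc n - l))"
    by (simp add: core_def sum.distrib sum_distrib_left)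
  also have "\<dots> = core + a (Suc m) * (c * a (Suc n))"
    by (simp only: rec)
  finally have last_column: "conv_sum a n (Suc m) = core + a (Suc m) * (c * a (Suc n))" .
  have "conv_sum a (Suc n) m = core + a (Suc n) * (\<Sum>k=0..m. a k / fact (Suc m - k))"
    unfolding conv_sum_def
    by (simp add: sum.atLeast0_atMost_Suc core_def sum_distrib_left Suc_diff_le)
  also have "\<dots> = core + a (Suc n) * (c * a (Suc m))"
    by (simp only: rec)
  finally show ?thesis using last_column by (simp add: ac_simps)
qed

lemma conv_sum_collapse:
  fixes a :: "nat \<Rightarrow> 'a::field_char_0" and c :: 'a
  assumes rec: "\<And>j. (\<Sum>i=0..j. a i / fact (Suc j - i)) = c * a (Suc j)"
  shows "conv_sum a n m = conv_sum a (n + m) 0"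
proof (induction m arbitrary: n)
  case 0
  show ?case by simp
next
  case (Suc m)
  have "conv_sum a n (Suc m) = conv_sum a (Suc n) m"
    using rec by (rule conv_sum_shift)
  also have "\<dots> = conv_sum a (n + Suc m) 0"
    using Suc.IH[of "Suc n"] by simp
  finally show ?case .
qed

lemma euler_conv_sum: "conv_sum euler_coeff n m = -2 * euler_coeff (n + m + 1)"
proof -
  have "conv_sum euler_coeff n m = conv_sum euler_coeff (n + m) 0"
    using euler_coeff_recurrence by (rule conv_sum_collapse)
  also have "\<dots> = (\<Sum>l=0..n+m. euler_coeff l / fact (Suc (n + m) - l))"
    by (simp add: conv_sum_def euler_coeff_0)
  finally show ?thesis by (simp add: euler_coeff_recurrence)
qed

lemma Gamma_plus_one_nat: "Gamma (real a + 1) = fact a"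
  using Gamma_fact[of a] by (simp add: add.commute)

lemma Gamma_plus_two_nat: "Gamma (real a + 2) = fact (Suc a)"
  using Gamma_fact[of "Suc a"] by (simp add: add.commute)

lemma fact_sum_succ_split:
  "fact (n + m + 1) = real ((n + m) choose n) * real (n + m + 1) * fact n * (fact m :: real)"
  by (simp add: binomial_fact)

lemma gamma_summand:
  assumes "l \<le> n" "k \<le> m"
  shows "real (n choose l) * real (m choose k) * euler_num l * euler_num k
                * (Gamma (real (n - l) + 1) * Gamma (real (m - k) + 1)
                   / Gamma (real (n + m - l - k) + 2))
       = fact n * fact m * (euler_coeff l * euler_coeff k / fact (n + m + 1 - l - k))"
proof -
  have "n + m + 1 - l - k = Suc (n + m - l - k)" using assms by simp
  thus ?thesis using assms
    unfolding Gamma_plus_one_nat Gamma_plus_two_nat euler_num_eq_fact_coeff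
    by (simp add: binomial_fact field_simps)
qed

lemma binomial_summand:
  assumes "l \<le> n" "k \<le> m"
  shows "real (n choose l) * real (m choose k) * real ((n + m) choose n)
                / real ((n + m - l - k) choose (n - l))
                * (real (n + m + 1) * euler_num l * euler_num k / real (n + m - l - k + 1))
       = fact (n + m + 1) * (euler_coeff l * euler_coeff k / fact (n + m + 1 - l - k))"
proof -
  define r where "r = n + m - l - k"
  have shift: "n + m + 1 - l - k = Suc r" and rest: "r - (n - l) = m - k"
    and le: "n - l \<le> r" using assms by (simp_all add: r_def)
  have fact_r: "fact (Suc r) = real (r + 1) * (fact r :: real)" by simp
  have "real (r + 1) > 0" by simp
  thus ?thesis using assms
    unfolding shift euler_num_eq_fact_coeff r_def[symmetric]
      binomial_fact[OF le] rest fact_sum_succ_split fact_r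
    by (simp add: binomial_fact field_simps del: of_nat_add of_nat_Suc)
qed

theorem theorem4:
  fixes n m :: nat
  assumes "m \<ge> 1"
  shows "(- 2 * euler_num (n + m + 1) / (real ((n + m) choose n) * real (n + m + 1))
           = (\<Sum>l=0..n. \<Sum>k=0..m. real (n choose l) * real (m choose k)
                * euler_num l * euler_num k
                * (Gamma (real (n - l) + 1) * Gamma (real (m - k) + 1)
                   / Gamma (real (n + m - l - k) + 2))))
       \<and> (euler_num (n + m + 1) = - (1/2) * (\<Sum>l=0..n. \<Sum>k=0..m.
                real (n choose l) * real (m choose k) * real ((n + m) choose n)
                / real ((n + m - l - k) choose (n - l))
                * (real (n + m + 1) * euler_num l * euler_num k / real (n + m - l - k + 1))))"
proof -
  have gamma_form: "(\<Sum>l=0..n. \<Sum>k=0..m. real (n choose l) * real (m choose k)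
                * euler_num l * euler_num k
                * (Gamma (real (n - l) + 1) * Gamma (real (m - k) + 1)
                   / Gamma (real (n + m - l - k) + 2)))
       = fact n * fact m * conv_sum euler_coeff n m"
    unfolding conv_sum_def sum_distrib_left
    by (intro sum.cong refl gamma_summand) auto
  have binomial_form: "(\<Sum>l=0..n. \<Sum>k=0..m.
                real (n choose l) * real (m choose k) * real ((n + m) choose n)
                / real ((n + m - l - k) choose (n - l))
                * (real (n + m + 1) * euler_num l * euler_num k / real (n + m - l - k + 1)))
       = fact (n + m + 1) * conv_sum euler_coeff n m"
    unfolding conv_sum_def sum_distrib_left
    by (intro sum.cong refl binomial_summand) auto
  have top: "euler_num (n + m + 1) = fact (n + m + 1) * euler_coeff (n + m + 1)"
    by (rule euler_num_eq_fact_coeff)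
  have nonzero: "real ((n + m) choose n) * real (n + m + 1) \<noteq> 0" by simp
  show ?thesis
    unfolding gamma_form binomial_form euler_conv_sum top fact_sum_succ_split
    using nonzero by (simp add: field_simps)
qed

end
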